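(* Let $P$ be a probability distribution of a random variable $\xi$, $\mathcal X\subseteq\mathbb R^d$, $\lambda>0$. Assume: (i) for every $\xi$, $x\mapsto \ell(x;\xi)$ is $G$-Lipschitz continuous and $L$-smooth on $\mathcal X$; (ii) $\psi:\mathbb R\to[0,+\infty]$ is convex, $\psi(1)=0$, $\psi(t)=+\infty$ for $t<0$, and $\psi^*(t)=\sup_s(st-\psi(s))$ is $M$-smooth; (iii) for all $x\in\mathcal X$, $\mathbb E_{\xi\sim P}(\ell(x;\xi)-\ell(x))^2\le\sigma^2$ where $\ell(x)=\mathbb E_{\xi\sim P}\ell(x;\xi)$. Define the stochastic objective $\widehat{\mathcal L}(x,\eta,\xi)=\lambda\psi^*\big(\frac{\ell(x;\xi)-G\eta}{\lambda}\big)+G\eta$ and $\widehat{\mathcal L}(x,\eta)=\mathbb E_{\xi\sim P}\widehat{\mathcal L}(x,\eta,\xi)$, with gradients taken in $(x,\eta)$. Then for all $(x,\eta)$, $$\mathbb E_\xi\|\nabla\widehat{\mathcal L}(x,\eta,\xi)-\nabla\widehat{\mathcal L}(x,\eta)\|^2\le 11G^2M^2\lambda^{-2}\sigma^2+8\big(G^2+\|\nabla\widehat{\mathcal L}(x,\eta)\|^2\big).$$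
   Context: Norms are Euclidean norms on $\mathbb R^{d+1}$. *)

theory Defs
  imports "HOL-Analysis.Analysis" "HOL-Probability.Probability"
begin

definition grad :: "('a::real_inner \<Rightarrow> real) \<Rightarrow> 'a \<Rightarrow> 'a" where
  "grad f z = (SOME D. GDERIV f z :> D)"

definition fconj :: "(real \<Rightarrow> ereal) \<Rightarrow> real \<Rightarrow> ereal" where
  "fconj \<psi> t = (SUP s. ereal (s * t) - \<psi> s)"

definition ereal_convex :: "(real \<Rightarrow> ereal) \<Rightarrow> bool" where
  "ereal_convex \<psi> \<longleftrightarrow> (\<forall>x y t. 0 \<le> t \<and> t \<le> 1 \<longrightarrow>
      \<psi> ((1 - t) * x + t * y) \<le> ereal (1 - t) * \<psi> x + ereal t * \<psi> y)"

definition lipschitz_on_set :: "real \<Rightarrow> 'a::real_normed_vector set \<Rightarrow> ('a \<Rightarrow> 'b::real_normed_vector) \<Rightarrow> bool" where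
  "lipschitz_on_set G X f \<longleftrightarrow> (\<forall>x\<in>X. \<forall>y\<in>X. norm (f x - f y) \<le> G * norm (x - y))"

definition smooth_on_set :: "real \<Rightarrow> 'a::real_inner set \<Rightarrow> ('a \<Rightarrow> real) \<Rightarrow> bool" where
  "smooth_on_set L X f \<longleftrightarrow> (\<forall>x\<in>X. f differentiable (at x)) \<and>
      (\<forall>x\<in>X. \<forall>y\<in>X. norm (grad f x - grad f y) \<le> L * norm (x - y))"

definition Lhat :: "(real \<Rightarrow> ereal) \<Rightarrow> real \<Rightarrow> real \<Rightarrow> ('a \<Rightarrow> 'b \<Rightarrow> real) \<Rightarrow> 'a \<times> real \<Rightarrow> 'b \<Rightarrow> real" where
  "Lhat \<psi> lam G ell z \<xi> =
     lam * real_of_ereal (fconj \<psi> ((ell (fst z) \<xi> - G * snd z) / lam)) + G * snd z"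

end

theory Submission
  imports Defs
begin

(*
  At (x, eta) the stochastic gradient is v xi = (a xi *R grad l(x;xi), G (1 - a xi)) with
  a xi = psi*'((l(x;xi) - G eta) / lam), and differentiation under the integral sign (dominated
  convergence along rays) shows that the gradient w of the expected objective is the mean of v.
  Hence E |v - w|^2 <= E |v|^2 - |w|^2 <= G^2 E (a^2 + (1 - a)^2) - |w|^2, because |grad l| <= G.
  Since psi*' is M-Lipschitz, Var a <= M^2 sigma^2 / lam^2; and the eta-component of w is
  G (1 - E a), so the remaining term (G E a)^2 = (G - w_eta)^2 is at most 2 G^2 + 2 |w|^2.
*)

lemma gderiv_grad:
  fixes f :: "'a::euclidean_space \<Rightarrow> real"
  assumes "f differentiable (at z)"
  shows "GDERIV f z :> grad f z"
proof -
  obtain F where F: "(f has_derivative F) (at z)"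
    using assms unfolding differentiable_def by blast
  then have "linear F" by (rule has_derivative_linear)
  define D where "D = (\<Sum>b\<in>Basis. F b *\<^sub>R b)"
  have "F h = inner h D" for h
  proof -
    have "F h = F (\<Sum>b\<in>Basis. inner h b *\<^sub>R b)" by (simp add: euclidean_representation)
    also have "\<dots> = (\<Sum>b\<in>Basis. inner h b * F b)"
      using \<open>linear F\<close> by (simp add: linear_sum linear_scale)
    also have "\<dots> = inner h D" unfolding D_def by (simp add: inner_sum_right mult.commute)
    finally show ?thesis .
  qed
  then have "GDERIV f z :> D" using F unfolding gderiv_def by (metis ext)
  then show ?thesis unfolding grad_def by (rule someI)
qed

lemma grad_eqI:
  assumes "GDERIV f z :> D"
  shows "grad f z = D"
proof -
  have "GDERIV f z :> grad f z" unfolding grad_def using assms by (rule someI)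
  then have "(\<lambda>h. inner h (grad f z)) = (\<lambda>h. inner h D)"
    using assms unfolding gderiv_def by (rule has_derivative_unique)
  then have "inner (grad f z - D) (grad f z - D) = 0"
    by (metis inner_diff_right right_minus_eq)
  then show ?thesis by simp
qed

lemma gderiv_line:
  assumes "GDERIV f z :> D"
  shows "((\<lambda>t. f (z + t *\<^sub>R h)) has_real_derivative inner h D) (at 0)"
proof -
  have "((\<lambda>t::real. z + t *\<^sub>R h) has_derivative (\<lambda>t. t *\<^sub>R h)) (at 0)"
    by (auto intro!: derivative_eq_intros)
  from has_derivative_compose[OF this, of f "\<lambda>h. inner h D"] assms
  have "((\<lambda>t. f (z + t *\<^sub>R h)) has_derivative (\<lambda>t. inner h D * t)) (at 0)"
    unfolding gderiv_def by (simp add: mult.commute)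
  then show ?thesis by (simp add: has_field_derivative_def)
qed

lemma gderiv_norm_le_lipschitz:
  fixes f :: "'a::real_inner \<Rightarrow> real"
  assumes "open X" "x \<in> X" "lipschitz_on_set G X f" "GDERIV f x :> g"
  shows "norm g \<le> \<bar>G\<bar>"
proof -
  have "((\<lambda>t. x + t *\<^sub>R g) \<longlongrightarrow> x) (at (0::real))"
    by (auto intro!: tendsto_eq_intros)
  then have "eventually (\<lambda>t. x + t *\<^sub>R g \<in> X) (at 0)"
    using assms(1,2) by (rule topological_tendstoD)
  then have bound: "eventually (\<lambda>t. \<bar>(f (x + t *\<^sub>R g) - f x) / t\<bar> \<le> \<bar>G\<bar> * norm g) (at 0)"
  proof (rule eventually_mono)
    fix t assume "x + t *\<^sub>R g \<in> X"
    then have "\<bar>f (x + t *\<^sub>R g) - f x\<bar> \<le> G * norm (t *\<^sub>R g)"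
      using assms(2,3) unfolding lipschitz_on_set_def by fastforce
    also have "\<dots> \<le> \<bar>G\<bar> * norm g * \<bar>t\<bar>"
      using mult_right_mono[OF abs_ge_self[of G], of "\<bar>t\<bar> * norm g"] by (simp add: mult_ac)
    finally show "\<bar>(f (x + t *\<^sub>R g) - f x) / t\<bar> \<le> \<bar>G\<bar> * norm g"
      by (cases "t = 0") (simp_all add: pos_divide_le_eq)
  qed
  have "((\<lambda>t. (f (x + t *\<^sub>R g) - f x) / t) \<longlongrightarrow> inner g g) (at 0)"
    using gderiv_line[OF assms(4), of g] by (simp add: DERIV_def)
  from tendsto_le[OF _ tendsto_const tendsto_rabs[OF this] bound]
  have "\<bar>inner g g\<bar> \<le> \<bar>G\<bar> * norm g" by simp
  then have "norm g * norm g \<le> \<bar>G\<bar> * norm g"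
    by (simp add: power2_eq_square flip: power2_norm_eq_inner)
  then show ?thesis by (cases "norm g = 0") auto
qed

lemma lipschitz_deriv_increment_le:
  fixes f f' :: "real \<Rightarrow> real"
  assumes f': "\<And>t. (f has_real_derivative f' t) (at t)" and L: "M-lipschitz_on UNIV f'"
  shows "\<bar>f b - f a\<bar> \<le> \<bar>b - a\<bar> * (\<bar>f' a\<bar> + M * \<bar>b - a\<bar>)"
proof -
  have "\<exists>c. \<bar>c - a\<bar> \<le> \<bar>b - a\<bar> \<and> f b - f a = (b - a) * f' c"
  proof (cases a b rule: linorder_cases)
    case less
    then obtain c where "a < c" "c < b" "f b - f a = (b - a) * f' c"
      using MVT2[OF less f'] by blast
    then show ?thesis by (intro exI[of _ c]) simp
  next
    case greater
    then obtain c where "b < c" "c < a" "f a - f b = (a - b) * f' c"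
      using MVT2[OF greater f'] by blast
    then show ?thesis by (intro exI[of _ c]) (simp add: algebra_simps)
  qed simp
  then obtain c where c: "\<bar>c - a\<bar> \<le> \<bar>b - a\<bar>" "f b - f a = (b - a) * f' c" by blast
  have "\<bar>f' c\<bar> \<le> \<bar>f' a\<bar> + M * \<bar>c - a\<bar>"
    using lipschitz_onD[OF L, of c a] by (simp add: dist_real_def)
  also have "\<dots> \<le> \<bar>f' a\<bar> + M * \<bar>b - a\<bar>"
    using c(1) lipschitz_on_nonneg[OF L] by (simp add: mult_left_mono)
  finally show ?thesis unfolding c(2) abs_mult by (simp add: mult_left_mono)
qed

lemma DERIV_integral_dominated:
  fixes \<phi> :: "real \<Rightarrow> 'b \<Rightarrow> real"
  assumes \<Phi>': "((\<lambda>t. \<integral>\<xi>. \<phi> t \<xi> \<partial>\<mu>) has_real_derivative D) (at 0)"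
    and \<phi>': "\<And>\<xi>. \<xi> \<in> space \<mu> \<Longrightarrow> ((\<lambda>t. \<phi> t \<xi>) has_real_derivative d \<xi>) (at 0)"
    and "0 < \<delta>"
    and meas: "\<And>t. \<phi> t \<in> borel_measurable \<mu>"
    and int0: "integrable \<mu> (\<phi> 0)"
    and W: "integrable \<mu> W"
    and dom: "\<And>t \<xi>. 0 < t \<Longrightarrow> t \<le> \<delta> \<Longrightarrow> \<xi> \<in> space \<mu> \<Longrightarrow> \<bar>\<phi> t \<xi> - \<phi> 0 \<xi>\<bar> \<le> t * W \<xi>"
  shows "integrable \<mu> d" and "D = (\<integral>\<xi>. d \<xi> \<partial>\<mu>)"
proof -
  \<comment> \<open>Both derivatives exist, so it suffices to compare them along \<open>t n \<rightarrow> 0\<close>, where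
    the difference quotients are dominated by \<open>W\<close>.\<close>
  define t where "t n = \<delta> / Suc n" for n
  define q where "q n \<xi> = (\<phi> (t n) \<xi> - \<phi> 0 \<xi>) / t n" for n \<xi>
  have t: "0 < t n" "t n \<le> \<delta>" for n
    using \<open>0 < \<delta>\<close> by (auto simp: t_def field_simps)
  have "t \<longlonglongrightarrow> 0"
    unfolding t_def by (rule LIMSEQ_Suc[OF lim_const_over_n])
  moreover have "\<forall>n. t n \<noteq> 0"
    using t(1) by (metis less_irrefl)
  ultimately have t_at: "filterlim t (at 0) sequentially"
    by (intro filterlim_atI always_eventually)
  have quotient_lim: "(\<lambda>n. (g (t n) - g 0) / t n) \<longlonglongrightarrow> D'"
    if "(g has_real_derivative D') (at 0)" for g D'
  proof -
    have "((\<lambda>s. (g s - g 0) / s) \<longlongrightarrow> D') (at 0)"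
      using that by (simp add: DERIV_def)
    from filterlim_compose[OF this t_at] show ?thesis .
  qed
  have q_meas: "q n \<in> borel_measurable \<mu>" for n
    unfolding q_def by (intro borel_measurable_divide borel_measurable_diff meas borel_measurable_const)
  have q_lim: "(\<lambda>n. q n \<xi>) \<longlonglongrightarrow> d \<xi>" if "\<xi> \<in> space \<mu>" for \<xi>
    unfolding q_def by (rule quotient_lim[OF \<phi>'[OF that]])
  have d_meas: "d \<in> borel_measurable \<mu>"
    by (rule borel_measurable_LIMSEQ_real[OF q_lim q_meas])
  have q_dom: "AE \<xi> in \<mu>. norm (q n \<xi>) \<le> W \<xi>" for n
    using dom[OF t] t(1)[of n] by (intro AE_I2) (simp add: q_def pos_divide_le_eq mult.commute)
  note dominated = d_meas q_meas W AE_I2[OF q_lim] q_dom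
  show "integrable \<mu> d"
    by (rule integrable_dominated_convergence[OF dominated])
  have "(\<lambda>n. \<integral>\<xi>. q n \<xi> \<partial>\<mu>) \<longlonglongrightarrow> (\<integral>\<xi>. d \<xi> \<partial>\<mu>)"
    by (rule integral_dominated_convergence[OF dominated])
  moreover have "(\<integral>\<xi>. q n \<xi> \<partial>\<mu>) = ((\<integral>\<xi>. \<phi> (t n) \<xi> \<partial>\<mu>) - (\<integral>\<xi>. \<phi> 0 \<xi> \<partial>\<mu>)) / t n" for n
  proof -
    have "\<phi> (t n) = (\<lambda>\<xi>. \<phi> 0 \<xi> + t n * q n \<xi>)"
      using t(1)[of n] by (auto simp: q_def)
    moreover have "integrable \<mu> (q n)"
      by (rule integrable_dominated_convergence2[OF dominated])
    ultimately have "(\<integral>\<xi>. \<phi> (t n) \<xi> \<partial>\<mu>) = (\<integral>\<xi>. \<phi> 0 \<xi> \<partial>\<mu>) + t n * (\<integral>\<xi>. q n \<xi> \<partial>\<mu>)"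
      using int0 by simp
    then show ?thesis using t(1)[of n] by simp
  qed
  ultimately have "(\<lambda>n. ((\<integral>\<xi>. \<phi> (t n) \<xi> \<partial>\<mu>) - (\<integral>\<xi>. \<phi> 0 \<xi> \<partial>\<mu>)) / t n) \<longlonglongrightarrow> (\<integral>\<xi>. d \<xi> \<partial>\<mu>)"
    by (simp only:)
  then show "D = (\<integral>\<xi>. d \<xi> \<partial>\<mu>)"
    by (rule LIMSEQ_unique[OF quotient_lim[OF \<Phi>']])
qed

lemma gderiv_integral_inner:
  fixes F :: "'a::real_inner \<Rightarrow> 'b \<Rightarrow> real"
  assumes "GDERIV (\<lambda>z. \<integral>\<xi>. F z \<xi> \<partial>\<mu>) z :> w"
    and "\<And>\<xi>. \<xi> \<in> space \<mu> \<Longrightarrow> GDERIV (\<lambda>z. F z \<xi>) z :> v \<xi>"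
    and "0 < \<delta>"
    and "\<And>y. F y \<in> borel_measurable \<mu>"
    and "integrable \<mu> (F z)"
    and "integrable \<mu> W"
    and "\<And>t \<xi>. 0 < t \<Longrightarrow> t \<le> \<delta> \<Longrightarrow> \<xi> \<in> space \<mu> \<Longrightarrow>
           \<bar>F (z + t *\<^sub>R h) \<xi> - F z \<xi>\<bar> \<le> t * W \<xi>"
  shows "integrable \<mu> (\<lambda>\<xi>. inner h (v \<xi>))" and "inner h w = (\<integral>\<xi>. inner h (v \<xi>) \<partial>\<mu>)"
proof -
  have \<Phi>': "((\<lambda>t. \<integral>\<xi>. F (z + t *\<^sub>R h) \<xi> \<partial>\<mu>) has_real_derivative inner h w) (at 0)"
    using gderiv_line[OF assms(1)] by simp
  have F': "((\<lambda>t. F (z + t *\<^sub>R h) \<xi>) has_real_derivative inner h (v \<xi>)) (at 0)"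
    if "\<xi> \<in> space \<mu>" for \<xi>
    using gderiv_line[OF assms(2)[OF that]] by simp
  have int0: "integrable \<mu> (F (z + 0 *\<^sub>R h))"
    using assms(5) by simp
  have dom: "\<bar>F (z + t *\<^sub>R h) \<xi> - F (z + 0 *\<^sub>R h) \<xi>\<bar> \<le> t * W \<xi>"
    if "0 < t" "t \<le> \<delta>" "\<xi> \<in> space \<mu>" for t \<xi>
    using assms(7)[OF that] by simp
  note dominated = DERIV_integral_dominated[where \<phi>="\<lambda>t. F (z + t *\<^sub>R h)",
      OF \<Phi>' F' assms(3,4) int0 assms(6) dom]
  show "integrable \<mu> (\<lambda>\<xi>. inner h (v \<xi>))" by (rule dominated(1))
  show "inner h w = (\<integral>\<xi>. inner h (v \<xi>) \<partial>\<mu>)" by (rule dominated(2))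
qed

lemma (in prob_space) variance_le_expectation_sq_diff:
  fixes X :: "'a \<Rightarrow> real"
  assumes "integrable M X" "integrable M (\<lambda>x. (X x)\<^sup>2)"
  shows "variance X \<le> expectation (\<lambda>x. (X x - c)\<^sup>2)"
proof -
  have "expectation (\<lambda>x. (X x - c)\<^sup>2) = expectation (\<lambda>x. (X x)\<^sup>2) - 2 * c * expectation X + c\<^sup>2"
    using assms by (simp add: power2_diff prob_space)
  also have "\<dots> = variance X + (expectation X - c)\<^sup>2"
    using variance_eq[OF assms] by (simp add: power2_diff)
  finally show ?thesis by simp
qed

lemma (in prob_space) integrable_sq_if_integrable_sq_diff:
  fixes X :: "'a \<Rightarrow> real"
  assumes "integrable M X" "integrable M (\<lambda>x. (X x - c)\<^sup>2)"
  shows "integrable M (\<lambda>x. (X x)\<^sup>2)"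
proof -
  have "integrable M (\<lambda>x. (X x - c)\<^sup>2 + (2 * c * X x - c\<^sup>2))"
    using assms by simp
  then show ?thesis
    by (simp add: power2_diff)
qed

lemma (in prob_space) lipschitz_image_variance_le:
  fixes X :: "'a \<Rightarrow> real"
  assumes X: "X \<in> borel_measurable M" "integrable M (\<lambda>x. (X x)\<^sup>2)"
    and \<phi>: "K-lipschitz_on UNIV \<phi>"
  shows "integrable M (\<lambda>x. \<phi> (X x))" and "integrable M (\<lambda>x. (\<phi> (X x))\<^sup>2)"
    and "variance (\<lambda>x. \<phi> (X x)) \<le> K\<^sup>2 * variance X"
proof -
  have X_int: "integrable M X"
    using square_integrable_imp_integrable X by blast
  have \<phi>X_meas: "(\<lambda>x. \<phi> (X x)) \<in> borel_measurable M"
    using borel_measurable_continuous_on[OF lipschitz_on_continuous_on[OF \<phi>] X(1)] .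
  have \<phi>_sq: "(\<phi> s - \<phi> t)\<^sup>2 \<le> K\<^sup>2 * (s - t)\<^sup>2" for s t
  proof -
    have "\<bar>\<phi> s - \<phi> t\<bar> \<le> K * \<bar>s - t\<bar>"
      using lipschitz_onD[OF \<phi>, of s t] by (simp add: dist_real_def)
    then have "\<bar>\<phi> s - \<phi> t\<bar>\<^sup>2 \<le> (K * \<bar>s - t\<bar>)\<^sup>2"
      by (rule power_mono) simp
    then show ?thesis by (simp add: power_mult_distrib)
  qed
  show sq_int: "integrable M (\<lambda>x. (\<phi> (X x))\<^sup>2)"
  proof (rule Bochner_Integration.integrable_bound[OF _ _ AE_I2])
    show "integrable M (\<lambda>x. 2 * K\<^sup>2 * (X x)\<^sup>2 + 2 * (\<phi> 0)\<^sup>2)"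
      using X by simp
    show "(\<lambda>x. (\<phi> (X x))\<^sup>2) \<in> borel_measurable M"
      using \<phi>X_meas by measurable
    fix x
    have "(\<phi> (X x))\<^sup>2 \<le> 2 * (\<phi> (X x) - \<phi> 0)\<^sup>2 + 2 * (\<phi> 0)\<^sup>2"
      using zero_le_power2[of "\<phi> (X x) - 2 * \<phi> 0"] by (simp add: power2_eq_square algebra_simps)
    also have "\<dots> \<le> 2 * K\<^sup>2 * (X x)\<^sup>2 + 2 * (\<phi> 0)\<^sup>2"
      using \<phi>_sq[of "X x" 0] by simp
    finally show "norm ((\<phi> (X x))\<^sup>2) \<le> norm (2 * K\<^sup>2 * (X x)\<^sup>2 + 2 * (\<phi> 0)\<^sup>2)"
      by simp
  qed
  show \<phi>X_int: "integrable M (\<lambda>x. \<phi> (X x))"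
    by (rule square_integrable_imp_integrable[OF \<phi>X_meas sq_int])
  have "variance (\<lambda>x. \<phi> (X x)) \<le> expectation (\<lambda>x. (\<phi> (X x) - \<phi> (expectation X))\<^sup>2)"
    by (rule variance_le_expectation_sq_diff[OF \<phi>X_int sq_int])
  also have "\<dots> \<le> expectation (\<lambda>x. K\<^sup>2 * (X x - expectation X)\<^sup>2)"
    using \<phi>X_int sq_int X X_int \<phi>_sq by (intro integral_mono) (simp_all add: power2_diff)
  also have "\<dots> = K\<^sup>2 * variance X"
    by simp
  finally show "variance (\<lambda>x. \<phi> (X x)) \<le> K\<^sup>2 * variance X" .
qed

lemma (in prob_space) integrable_lipschitz_deriv_comp:
  fixes f f' :: "real \<Rightarrow> real" and X :: "'a \<Rightarrow> real"
  assumes f': "\<And>t. (f has_real_derivative f' t) (at t)" and L: "K-lipschitz_on UNIV f'"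
    and X: "X \<in> borel_measurable M" "integrable M (\<lambda>x. (X x)\<^sup>2)"
  shows "integrable M (\<lambda>x. f (X x))"
proof -
  have "continuous_on UNIV f"
    using f' by (meson DERIV_isCont continuous_at_imp_continuous_on)
  have "integrable M (\<lambda>x. f (X x) - f 0)"
  proof (rule Bochner_Integration.integrable_bound[OF _ _ AE_I2])
    have "integrable M X"
      using square_integrable_imp_integrable X by blast
    then show "integrable M (\<lambda>x. \<bar>f' 0\<bar> * \<bar>X x\<bar> + K * (X x)\<^sup>2)"
      using X by simp
    show "(\<lambda>x. f (X x) - f 0) \<in> borel_measurable M"
      using borel_measurable_continuous_on[OF \<open>continuous_on UNIV f\<close> X(1)] by simp
    fix x
    show "norm (f (X x) - f 0) \<le> norm (\<bar>f' 0\<bar> * \<bar>X x\<bar> + K * (X x)\<^sup>2)"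
      using lipschitz_deriv_increment_le[OF f' L, where a=0 and b="X x"] lipschitz_on_nonneg[OF L]
      by (simp add: power2_eq_square algebra_simps abs_mult)
  qed
  moreover have "integrable M (\<lambda>x. f 0)"
    by simp
  ultimately have "integrable M (\<lambda>x. (f (X x) - f 0) + f 0)"
    by (rule Bochner_Integration.integrable_add)
  then show ?thesis by simp
qed

lemma (in prob_space) nn_integral_sq_norm_diff_mean_le:
  fixes V :: "'a \<Rightarrow> 'c::real_inner"
  assumes "integrable M (\<lambda>x. inner w (V x))" "expectation (\<lambda>x. inner w (V x)) = (norm w)\<^sup>2"
    and "integrable M N" "\<And>x. x \<in> space M \<Longrightarrow> (norm (V x))\<^sup>2 \<le> N x"
  shows "(\<integral>\<^sup>+x. ennreal ((norm (V x - w))\<^sup>2) \<partial>M) \<le> ennreal (expectation N - (norm w)\<^sup>2)"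
proof -
  define B where "B = (\<lambda>x. N x - 2 * inner w (V x) + (norm w)\<^sup>2)"
  have le_B: "(norm (V x - w))\<^sup>2 \<le> B x" if "x \<in> space M" for x
  proof -
    have "(norm (V x - w))\<^sup>2 = (norm (V x))\<^sup>2 - 2 * inner w (V x) + (norm w)\<^sup>2"
      by (simp add: power2_norm_eq_inner inner_diff_left inner_diff_right inner_commute)
    then show ?thesis using assms(4)[OF that] by (simp add: B_def)
  qed
  have B_int: "integrable M B"
    using assms(1,3) by (simp add: B_def)
  have "(\<integral>\<^sup>+x. ennreal ((norm (V x - w))\<^sup>2) \<partial>M) \<le> (\<integral>\<^sup>+x. ennreal (B x) \<partial>M)"
    using le_B by (intro nn_integral_mono ennreal_leI)
  also have "\<dots> = ennreal (expectation B)"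
    using B_int le_B by (intro nn_integral_eq_integral AE_I2) (auto intro: order_trans[OF zero_le_power2])
  also have "expectation B = expectation N - (norm w)\<^sup>2"
    using assms(1-3) by (simp add: B_def prob_space)
  finally show ?thesis .
qed

locale dro_objective = prob_space P
  for P :: "'b measure" and X :: "'a::euclidean_space set" and ell :: "'a \<Rightarrow> 'b \<Rightarrow> real"
    and \<psi> :: "real \<Rightarrow> ereal" and f f' :: "real \<Rightarrow> real" and lam G M \<sigma> :: real +
  assumes X_open: "open X"
    and lam_pos: "0 < lam"
    and ell_measurable: "\<And>x. (\<lambda>\<xi>. ell x \<xi>) \<in> borel_measurable P"
    and ell_lipschitz: "\<And>\<xi>. \<xi> \<in> space P \<Longrightarrow> lipschitz_on_set G X (\<lambda>x. ell x \<xi>)"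
    and ell_differentiable: "\<And>\<xi> x. \<xi> \<in> space P \<Longrightarrow> x \<in> X \<Longrightarrow> (\<lambda>x. ell x \<xi>) differentiable (at x)"
    and ell_sq_integrable: "\<And>x. x \<in> X \<Longrightarrow> integrable P (\<lambda>\<xi>. (ell x \<xi>)\<^sup>2)"
    and ell_variance_le: "\<And>x. x \<in> X \<Longrightarrow> variance (\<lambda>\<xi>. ell x \<xi>) \<le> \<sigma>\<^sup>2"
    and conj_eq: "\<And>t. fconj \<psi> t = ereal (f t)"
    and f_deriv: "\<And>t. (f has_real_derivative f' t) (at t)"
    and f'_lipschitz: "M-lipschitz_on UNIV f'"
begin

lemma Lhat_eq: "Lhat \<psi> lam G ell z \<xi> = lam * f ((ell (fst z) \<xi> - G * snd z) / lam) + G * snd z"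
  by (simp add: Lhat_def conj_eq)

lemma Lhat_measurable: "(\<lambda>\<xi>. Lhat \<psi> lam G ell z \<xi>) \<in> borel_measurable P"
proof -
  have "continuous_on UNIV f"
    using f_deriv by (meson DERIV_isCont continuous_at_imp_continuous_on)
  moreover have "(\<lambda>\<xi>. (ell (fst z) \<xi> - G * snd z) / lam) \<in> borel_measurable P"
    using ell_measurable[of "fst z"] by measurable
  ultimately have "(\<lambda>\<xi>. f ((ell (fst z) \<xi> - G * snd z) / lam)) \<in> borel_measurable P"
    by (rule borel_measurable_continuous_on)
  then show ?thesis
    unfolding Lhat_eq by measurable
qed

lemma integrable_Lhat:
  assumes "x \<in> X"
  shows "integrable P (\<lambda>\<xi>. Lhat \<psi> lam G ell (x, \<eta>) \<xi>)"
proof -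
  define u where "u \<xi> = (ell x \<xi> - G * \<eta>) / lam" for \<xi>
  have "integrable P (\<lambda>\<xi>. ell x \<xi>)"
    using square_integrable_imp_integrable[OF ell_measurable ell_sq_integrable[OF assms]] .
  then have "integrable P (\<lambda>\<xi>. (u \<xi>)\<^sup>2)"
    using ell_sq_integrable[OF assms] by (simp add: u_def power_divide power2_diff)
  moreover have "u \<in> borel_measurable P"
    unfolding u_def using ell_measurable[of x] by measurable
  ultimately have "integrable P (\<lambda>\<xi>. f (u \<xi>))"
    by (rule integrable_lipschitz_deriv_comp[OF f_deriv f'_lipschitz, rotated])
  then have "integrable P (\<lambda>\<xi>. lam * f (u \<xi>) + G * \<eta>)"
    by simp
  then show ?thesis
    unfolding Lhat_eq u_def by simp
qed

lemma conj_deriv_moments: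
  assumes "x \<in> X"
  shows "integrable P (\<lambda>\<xi>. f' ((ell x \<xi> - G * \<eta>) / lam))"
    and "integrable P (\<lambda>\<xi>. (f' ((ell x \<xi> - G * \<eta>) / lam))\<^sup>2)"
    and "variance (\<lambda>\<xi>. f' ((ell x \<xi> - G * \<eta>) / lam)) \<le> (M / lam)\<^sup>2 * \<sigma>\<^sup>2"
proof -
  have "(M / lam)-lipschitz_on UNIV (\<lambda>s. f' ((s - G * \<eta>) / lam))"
  proof (rule lipschitz_onI)
    fix s t :: real
    have "dist (f' ((s - G * \<eta>) / lam)) (f' ((t - G * \<eta>) / lam))
        \<le> M * dist ((s - G * \<eta>) / lam) ((t - G * \<eta>) / lam)"
      using f'_lipschitz by (simp add: lipschitz_onD)
    also have "\<dots> = M / lam * dist s t"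
      using lam_pos by (simp add: dist_real_def flip: diff_divide_distrib)
    finally show "dist (f' ((s - G * \<eta>) / lam)) (f' ((t - G * \<eta>) / lam)) \<le> M / lam * dist s t" .
    show "0 \<le> M / lam"
      using lipschitz_on_nonneg[OF f'_lipschitz] lam_pos by simp
  qed
  note image = lipschitz_image_variance_le[OF ell_measurable ell_sq_integrable[OF assms] this]
  show "integrable P (\<lambda>\<xi>. f' ((ell x \<xi> - G * \<eta>) / lam))"
    and "integrable P (\<lambda>\<xi>. (f' ((ell x \<xi> - G * \<eta>) / lam))\<^sup>2)"
    by (fact image(1), fact image(2))
  show "variance (\<lambda>\<xi>. f' ((ell x \<xi> - G * \<eta>) / lam)) \<le> (M / lam)\<^sup>2 * \<sigma>\<^sup>2"
    using image(3) mult_left_mono[OF ell_variance_le[OF assms], of "(M / lam)\<^sup>2"] by simp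
qed

lemma gderiv_Lhat:
  fixes \<eta> :: real
  assumes "\<xi> \<in> space P" "x \<in> X"
  defines "a \<equiv> f' ((ell x \<xi> - G * \<eta>) / lam)"
  shows "GDERIV (\<lambda>z. Lhat \<psi> lam G ell z \<xi>) (x, \<eta>) :> (a *\<^sub>R grad (\<lambda>y. ell y \<xi>) x, G * (1 - a))"
proof -
  define g where "g = grad (\<lambda>y. ell y \<xi>) x"
  have "GDERIV (\<lambda>y. ell y \<xi>) x :> g"
    unfolding g_def using ell_differentiable[OF assms(1,2)] by (rule gderiv_grad)
  then have "((\<lambda>y. ell y \<xi>) has_derivative (\<lambda>h. inner h g)) (at (fst (x, \<eta>)))"
    unfolding gderiv_def by simp
  then have "((\<lambda>z. ell (fst z) \<xi>) has_derivative (\<lambda>h. inner (fst h) g)) (at (x, \<eta>))"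
    by (rule has_derivative_compose[OF has_derivative_fst[OF has_derivative_ident]])
  then have inner: "((\<lambda>z. (ell (fst z) \<xi> - G * snd z) / lam) has_derivative
      (\<lambda>h. (inner (fst h) g - G * snd h) / lam)) (at (x, \<eta>))"
    using lam_pos by (auto intro!: derivative_eq_intros)
  have outer: "(f has_derivative (\<lambda>t. a * t)) (at ((ell (fst (x, \<eta>)) \<xi> - G * snd (x, \<eta>)) / lam))"
    using f_deriv unfolding a_def has_field_derivative_def by simp
  have "((\<lambda>z. Lhat \<psi> lam G ell z \<xi>) has_derivative
      (\<lambda>h. lam * (a * ((inner (fst h) g - G * snd h) / lam)) + G * snd h)) (at (x, \<eta>))"
    unfolding Lhat_eq by (auto intro!: derivative_eq_intros has_derivative_compose[OF inner outer])
  moreover have "(\<lambda>h. lam * (a * ((inner (fst h) g - G * snd h) / lam)) + G * snd h)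
      = (\<lambda>h. inner h (a *\<^sub>R g, G * (1 - a)))"
    using lam_pos by (auto simp: inner_prod_def field_simps)
  ultimately show ?thesis
    unfolding gderiv_def g_def by simp
qed

lemma Lhat_increment_le:
  fixes \<eta> \<eta>' :: real
  assumes "\<xi> \<in> space P" "x \<in> X" "y \<in> X"
  defines "d \<equiv> norm ((y, \<eta>') - (x, \<eta>))"
  shows "\<bar>Lhat \<psi> lam G ell (y, \<eta>') \<xi> - Lhat \<psi> lam G ell (x, \<eta>) \<xi>\<bar>
    \<le> \<bar>G\<bar> * d * (2 * \<bar>f' ((ell x \<xi> - G * \<eta>) / lam)\<bar> + 4 * M * \<bar>G\<bar> * d / lam + 1)"
proof -
  define u where "u = (ell x \<xi> - G * \<eta>) / lam"
  define U where "U = (ell y \<xi> - G * \<eta>') / lam"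
  have d: "norm (y - x) \<le> d" "\<bar>\<eta>' - \<eta>\<bar> \<le> d"
    unfolding d_def
    using norm_fst_le[where x="y - x" and y="\<eta>' - \<eta>"] norm_snd_le[where x="y - x" and y="\<eta>' - \<eta>"]
    by simp_all
  have "\<bar>ell y \<xi> - ell x \<xi>\<bar> \<le> G * norm (y - x)"
    using ell_lipschitz[OF assms(1)] assms(2,3) unfolding lipschitz_on_set_def by fastforce
  also have "\<dots> \<le> \<bar>G\<bar> * d"
    using d(1) by (meson abs_ge_self abs_ge_zero mult_mono norm_ge_zero order_trans)
  moreover have G_d: "\<bar>G * (\<eta>' - \<eta>)\<bar> \<le> \<bar>G\<bar> * d"
    using mult_left_mono[OF d(2), of "\<bar>G\<bar>"] by (simp add: abs_mult)
  ultimately have "\<bar>(ell y \<xi> - ell x \<xi>) - G * (\<eta>' - \<eta>)\<bar> \<le> 2 * \<bar>G\<bar> * d"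
    using abs_triangle_ineq4[of "ell y \<xi> - ell x \<xi>" "G * (\<eta>' - \<eta>)"] by linarith
  moreover have "U - u = ((ell y \<xi> - ell x \<xi>) - G * (\<eta>' - \<eta>)) / lam"
    using lam_pos unfolding U_def u_def by (simp add: field_simps)
  ultimately have U_u: "\<bar>U - u\<bar> \<le> 2 * \<bar>G\<bar> * d / lam"
    using lam_pos by (simp add: divide_right_mono)
  have "\<bar>f U - f u\<bar> \<le> \<bar>U - u\<bar> * (\<bar>f' u\<bar> + M * \<bar>U - u\<bar>)"
    by (rule lipschitz_deriv_increment_le[OF f_deriv f'_lipschitz])
  also have "\<dots> \<le> (2 * \<bar>G\<bar> * d / lam) * (\<bar>f' u\<bar> + M * (2 * \<bar>G\<bar> * d / lam))"
    using U_u lipschitz_on_nonneg[OF f'_lipschitz]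
    by (intro mult_mono add_left_mono mult_left_mono) auto
  finally have fU: "lam * \<bar>f U - f u\<bar> \<le> \<bar>G\<bar> * d * (2 * \<bar>f' u\<bar> + 4 * M * \<bar>G\<bar> * d / lam)"
    using lam_pos by (simp add: field_simps mult_left_mono)
  have "Lhat \<psi> lam G ell (y, \<eta>') \<xi> - Lhat \<psi> lam G ell (x, \<eta>) \<xi> = lam * (f U - f u) + G * (\<eta>' - \<eta>)"
    by (simp add: Lhat_eq U_def u_def algebra_simps)
  then have "\<bar>Lhat \<psi> lam G ell (y, \<eta>') \<xi> - Lhat \<psi> lam G ell (x, \<eta>) \<xi>\<bar> \<le> lam * \<bar>f U - f u\<bar> + \<bar>G\<bar> * d"
    using abs_triangle_ineq[of "lam * (f U - f u)" "G * (\<eta>' - \<eta>)"] G_d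
    by (simp add: abs_mult abs_of_pos[OF lam_pos])
  also have "\<dots> \<le> \<bar>G\<bar> * d * (2 * \<bar>f' u\<bar> + 4 * M * \<bar>G\<bar> * d / lam + 1)"
    using fU by (simp add: algebra_simps)
  finally show ?thesis
    unfolding u_def .
qed

lemma grad_Lhat_mean:
  fixes \<eta> :: real
  assumes x: "x \<in> X" and w: "GDERIV (\<lambda>z. \<integral>\<xi>. Lhat \<psi> lam G ell z \<xi> \<partial>P) (x, \<eta>) :> w"
  shows "integrable P (\<lambda>\<xi>. inner h (grad (\<lambda>z. Lhat \<psi> lam G ell z \<xi>) (x, \<eta>)))"
    and "inner h w = expectation (\<lambda>\<xi>. inner h (grad (\<lambda>z. Lhat \<psi> lam G ell z \<xi>) (x, \<eta>)))"
proof -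
  obtain r where r: "0 < r" "ball x r \<subseteq> X"
    using X_open x open_contains_ball by blast
  define \<delta> where "\<delta> = r / (norm h + 1)"
  define a where "a \<xi> = f' ((ell x \<xi> - G * \<eta>) / lam)" for \<xi>
  define W where "W \<xi> = \<bar>G\<bar> * norm h * (2 * \<bar>a \<xi>\<bar> + 4 * M * \<bar>G\<bar> * (\<delta> * norm h) / lam + 1)" for \<xi>
  have "0 < \<delta>"
    unfolding \<delta>_def using r(1) by (simp add: add_nonneg_pos)
  have \<delta>_norm: "\<delta> * norm h < r"
    using r(1) by (simp add: \<delta>_def divide_less_eq add_nonneg_pos)
  have "integrable P W"
    using conj_deriv_moments(1)[OF x] unfolding W_def a_def by (simp add: distrib_left)
  have grad_Lhat: "GDERIV (\<lambda>z. Lhat \<psi> lam G ell z \<xi>) (x, \<eta>) :> grad (\<lambda>z. Lhat \<psi> lam G ell z \<xi>) (x, \<eta>)"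
    if "\<xi> \<in> space P" for \<xi>
    using gderiv_Lhat[OF that x] grad_eqI by metis
  have "\<bar>Lhat \<psi> lam G ell ((x, \<eta>) + t *\<^sub>R h) \<xi> - Lhat \<psi> lam G ell (x, \<eta>) \<xi>\<bar> \<le> t * W \<xi>"
    if t: "0 < t" "t \<le> \<delta>" and \<xi>: "\<xi> \<in> space P" for t \<xi>
  proof -
    have step: "(x, \<eta>) + t *\<^sub>R h = (x + t *\<^sub>R fst h, \<eta> + t * snd h)"
      by (cases h) simp
    have "norm (t *\<^sub>R fst h) \<le> \<delta> * norm h"
      using t norm_fst_le[of "fst h" "snd h"] by (simp add: mult_mono)
    then have xt: "x + t *\<^sub>R fst h \<in> X"
      using r(2) \<delta>_norm by (auto simp: dist_norm)
    have dist: "norm ((x + t *\<^sub>R fst h, \<eta> + t * snd h) - (x, \<eta>)) = t * norm h"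
      using t(1) unfolding step[symmetric] by simp
    have "\<bar>Lhat \<psi> lam G ell ((x, \<eta>) + t *\<^sub>R h) \<xi> - Lhat \<psi> lam G ell (x, \<eta>) \<xi>\<bar>
        \<le> \<bar>G\<bar> * (t * norm h) * (2 * \<bar>a \<xi>\<bar> + 4 * M * \<bar>G\<bar> * (t * norm h) / lam + 1)"
      using Lhat_increment_le[where \<eta>=\<eta> and \<eta>'="\<eta> + t * snd h", OF \<xi> x xt]
      unfolding step a_def dist .
    also have "\<dots> \<le> t * W \<xi>"
      unfolding W_def using t lam_pos lipschitz_on_nonneg[OF f'_lipschitz]
      by (auto simp: ac_simps intro!: mult_left_mono mult_right_mono add_mono divide_right_mono)
    finally show ?thesis .
  qed
  note mean = gderiv_integral_inner[OF w grad_Lhat \<open>0 < \<delta>\<close> Lhat_measurable integrable_Lhat[OF x]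
      \<open>integrable P W\<close> this]
  show "integrable P (\<lambda>\<xi>. inner h (grad (\<lambda>z. Lhat \<psi> lam G ell z \<xi>) (x, \<eta>)))"
    by (rule mean(1))
  show "inner h w = expectation (\<lambda>\<xi>. inner h (grad (\<lambda>z. Lhat \<psi> lam G ell z \<xi>) (x, \<eta>)))"
    by (rule mean(2))
qed

lemma sq_norm_grad_Lhat_le:
  fixes \<eta> :: real
  assumes \<xi>: "\<xi> \<in> space P" and x: "x \<in> X"
  defines "a \<equiv> f' ((ell x \<xi> - G * \<eta>) / lam)"
  shows "(norm (grad (\<lambda>z. Lhat \<psi> lam G ell z \<xi>) (x, \<eta>)))\<^sup>2 \<le> G\<^sup>2 * (a\<^sup>2 + (1 - a)\<^sup>2)"
proof -
  define g where "g = grad (\<lambda>y. ell y \<xi>) x"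
  have "norm g \<le> \<bar>G\<bar>"
    unfolding g_def
    by (rule gderiv_norm_le_lipschitz[OF X_open x ell_lipschitz[OF \<xi>]
          gderiv_grad[OF ell_differentiable[OF \<xi> x]]])
  then have "(norm g)\<^sup>2 \<le> G\<^sup>2"
    by (simp flip: abs_le_square_iff)
  then have "a\<^sup>2 * (norm g)\<^sup>2 \<le> a\<^sup>2 * G\<^sup>2"
    by (rule mult_left_mono) simp
  moreover have "grad (\<lambda>z. Lhat \<psi> lam G ell z \<xi>) (x, \<eta>) = (a *\<^sub>R g, G * (1 - a))"
    unfolding a_def g_def by (rule grad_eqI[OF gderiv_Lhat[OF \<xi> x]])
  ultimately show ?thesis
    by (simp add: norm_Pair power_mult_distrib distrib_left ac_simps)
qed

lemma snd_grad_expected_Lhat: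
  fixes \<eta> :: real
  assumes x: "x \<in> X" and w: "GDERIV (\<lambda>z. \<integral>\<xi>. Lhat \<psi> lam G ell z \<xi> \<partial>P) (x, \<eta>) :> w"
  shows "snd w = G * (1 - expectation (\<lambda>\<xi>. f' ((ell x \<xi> - G * \<eta>) / lam)))"
proof -
  have "snd w = expectation (\<lambda>\<xi>. inner (0, 1) (grad (\<lambda>z. Lhat \<psi> lam G ell z \<xi>) (x, \<eta>)))"
    using grad_Lhat_mean(2)[OF x w, of "(0, 1)"] by (simp add: inner_prod_def)
  also have "\<dots> = expectation (\<lambda>\<xi>. G * (1 - f' ((ell x \<xi> - G * \<eta>) / lam)))"
    by (rule Bochner_Integration.integral_cong) (simp_all add: grad_eqI[OF gderiv_Lhat[OF _ x]])
  also have "\<dots> = G * (1 - expectation (\<lambda>\<xi>. f' ((ell x \<xi> - G * \<eta>) / lam)))"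
    using conj_deriv_moments(1)[OF x] by (simp add: prob_space)
  finally show ?thesis .
qed

lemma Lhat_grad_variance_le:
  fixes \<eta> :: real
  assumes x: "x \<in> X" and diff: "(\<lambda>z. \<integral>\<xi>. Lhat \<psi> lam G ell z \<xi> \<partial>P) differentiable (at (x, \<eta>))"
  defines "w \<equiv> grad (\<lambda>z. \<integral>\<xi>. Lhat \<psi> lam G ell z \<xi> \<partial>P) (x, \<eta>)"
  shows "(\<integral>\<^sup>+\<xi>. ennreal ((norm (grad (\<lambda>z. Lhat \<psi> lam G ell z \<xi>) (x, \<eta>) - w))\<^sup>2) \<partial>P)
    \<le> ennreal (11 * G\<^sup>2 * M\<^sup>2 * \<sigma>\<^sup>2 / lam\<^sup>2 + 8 * (G\<^sup>2 + (norm w)\<^sup>2))"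
proof -
  have w: "GDERIV (\<lambda>z. \<integral>\<xi>. Lhat \<psi> lam G ell z \<xi> \<partial>P) (x, \<eta>) :> w"
    unfolding w_def using diff by (rule gderiv_grad)
  define a where "a \<xi> = f' ((ell x \<xi> - G * \<eta>) / lam)" for \<xi>
  define N where "N = (\<lambda>\<xi>. G\<^sup>2 * ((a \<xi>)\<^sup>2 + (1 - a \<xi>)\<^sup>2))"
  have a: "integrable P a" "integrable P (\<lambda>\<xi>. (a \<xi>)\<^sup>2)" "variance a \<le> (M / lam)\<^sup>2 * \<sigma>\<^sup>2"
    unfolding a_def by (fact conj_deriv_moments[OF x])+
  have N_int: "integrable P N"
    unfolding N_def using a(1,2) by (simp add: power2_diff)
  have "expectation N = G\<^sup>2 * (2 * expectation (\<lambda>\<xi>. (a \<xi>)\<^sup>2) - 2 * expectation a + 1)"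
    using a(1,2) by (simp add: N_def power2_diff prob_space algebra_simps)
  also have "\<dots> = G\<^sup>2 * (2 * variance a + 2 * (expectation a)\<^sup>2 - 2 * expectation a + 1)"
    using variance_eq[OF a(1,2)] by simp
  finally have EN: "expectation N = G\<^sup>2 * (2 * variance a + 2 * (expectation a)\<^sup>2 - 2 * expectation a + 1)" .
  have var_a: "G\<^sup>2 * variance a \<le> G\<^sup>2 * M\<^sup>2 * \<sigma>\<^sup>2 / lam\<^sup>2"
    using mult_left_mono[OF a(3), of "G\<^sup>2"] by (simp add: power_divide)
  have bound: "E - (n + s\<^sup>2) \<le> 11 * K + 8 * (G\<^sup>2 + (n + s\<^sup>2))"
    if "E = G\<^sup>2 * (2 * V + 2 * A\<^sup>2 - 2 * A + 1)" "s = G * (1 - A)" "G\<^sup>2 * V \<le> K" "0 \<le> K" "0 \<le> n"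
    for E V A n s K :: real
    using that(1,3-) zero_le_power2[of "G * (A - 2)"] zero_le_power2[of "G * A"]
    by (simp add: that(2) power2_eq_square algebra_simps)
  have "(norm w)\<^sup>2 = (norm (fst w))\<^sup>2 + (snd w)\<^sup>2"
    by (simp add: norm_prod_def)
  then have "expectation N - (norm w)\<^sup>2 \<le> 11 * G\<^sup>2 * M\<^sup>2 * \<sigma>\<^sup>2 / lam\<^sup>2 + 8 * (G\<^sup>2 + (norm w)\<^sup>2)"
    using bound[OF EN snd_grad_expected_Lhat[OF x w, folded a_def] var_a _ zero_le_power2[of "norm (fst w)"]]
    by (simp add: mult.assoc)
  moreover have "(\<integral>\<^sup>+\<xi>. ennreal ((norm (grad (\<lambda>z. Lhat \<psi> lam G ell z \<xi>) (x, \<eta>) - w))\<^sup>2) \<partial>P)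
      \<le> ennreal (expectation N - (norm w)\<^sup>2)"
    using grad_Lhat_mean[OF x w, of w] N_int sq_norm_grad_Lhat_le[OF _ x, where \<eta>=\<eta>]
    by (intro nn_integral_sq_norm_diff_mean_le) (simp_all add: N_def a_def power2_norm_eq_inner)
  ultimately show ?thesis
    by (meson ennreal_leI order_trans)
qed

end

theorem lemma3p3:
  fixes P :: "'b measure"
    and X :: "'a::euclidean_space set"
    and ell :: "'a \<Rightarrow> 'b \<Rightarrow> real"
    and \<psi> :: "real \<Rightarrow> ereal"
    and lam G L M \<sigma> :: real
    and x :: 'a and \<eta> :: real
  assumes P: "prob_space P"
    and X_open: "open X"
    and lam_pos: "lam > 0"
    and meas: "\<And>x. (\<lambda>\<xi>. ell x \<xi>) \<in> borel_measurable P"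
    and lip: "\<And>\<xi>. \<xi> \<in> space P \<Longrightarrow> lipschitz_on_set G X (\<lambda>x. ell x \<xi>)"
    and smooth: "\<And>\<xi>. \<xi> \<in> space P \<Longrightarrow> smooth_on_set L X (\<lambda>x. ell x \<xi>)"
    and psi_nonneg: "\<And>s. \<psi> s \<ge> 0"
    and psi_convex: "ereal_convex \<psi>"
    and psi_one: "\<psi> 1 = 0"
    and psi_neg: "\<And>t. t < 0 \<Longrightarrow> \<psi> t = \<infinity>"
    and conj_smooth: "\<exists>f. (\<forall>t. fconj \<psi> t = ereal (f t)) \<and> (\<forall>t. f differentiable (at t))
                        \<and> (\<forall>s t. \<bar>deriv f s - deriv f t\<bar> \<le> M * \<bar>s - t\<bar>)"
    and ell_int: "\<And>x. x \<in> X \<Longrightarrow> integrable P (\<lambda>\<xi>. ell x \<xi>)"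
    and var_int: "\<And>x. x \<in> X \<Longrightarrow>
                    integrable P (\<lambda>\<xi>. (ell x \<xi> - (\<integral>\<zeta>. ell x \<zeta> \<partial>P))\<^sup>2)"
    and var_bound: "\<And>x. x \<in> X \<Longrightarrow>
                    (\<integral>\<xi>. (ell x \<xi> - (\<integral>\<zeta>. ell x \<zeta> \<partial>P))\<^sup>2 \<partial>P) \<le> \<sigma>\<^sup>2"
    and x_in: "x \<in> X"
    and Lbar_diff: "(\<lambda>z. \<integral>\<xi>. Lhat \<psi> lam G ell z \<xi> \<partial>P) differentiable (at (x, \<eta>))"
  shows "(\<integral>\<^sup>+\<xi>. ennreal ((norm (grad (\<lambda>z. Lhat \<psi> lam G ell z \<xi>) (x, \<eta>)
                 - grad (\<lambda>z. \<integral>\<zeta>. Lhat \<psi> lam G ell z \<zeta> \<partial>P) (x, \<eta>)))\<^sup>2) \<partial>P)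
         \<le> ennreal (11 * G\<^sup>2 * M\<^sup>2 * \<sigma>\<^sup>2 / lam\<^sup>2
              + 8 * (G\<^sup>2 + (norm (grad (\<lambda>z. \<integral>\<zeta>. Lhat \<psi> lam G ell z \<zeta> \<partial>P) (x, \<eta>)))\<^sup>2))"
proof -
  interpret prob_space P
    by (rule P)
  obtain f where f_conj: "\<And>t. fconj \<psi> t = ereal (f t)" and f_diff: "\<And>t. f differentiable (at t)"
    and f'_lip: "\<And>s t. \<bar>deriv f s - deriv f t\<bar> \<le> M * \<bar>s - t\<bar>"
    using conj_smooth by blast
  have f_deriv: "(f has_real_derivative deriv f t) (at t)" for t
    using f_diff DERIV_deriv_iff_real_differentiable by blast
  have f'_lipschitz: "M-lipschitz_on UNIV (deriv f)"
    using f'_lip[of 1 0] f'_lip by (intro lipschitz_onI) (auto simp: dist_real_def)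
  have ell_sq: "integrable P (\<lambda>\<xi>. (ell y \<xi>)\<^sup>2)" if "y \<in> X" for y
    by (rule integrable_sq_if_integrable_sq_diff[OF ell_int[OF that] var_int[OF that]])
  interpret dro_objective P X ell \<psi> f "deriv f" lam G M \<sigma>
    by unfold_locales
      (use X_open lam_pos meas lip smooth ell_sq var_bound f_conj f_deriv f'_lipschitz in
        \<open>auto simp: smooth_on_set_def\<close>)
  show ?thesis
    by (rule Lhat_grad_variance_le[OF x_in Lbar_diff])
qed

end
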